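(* Let $\mathbf{Y}=(\{0,1\}^{\mathbb{Z}},\mathcal{B},\nu,S)$ with $\nu=(\tfrac12(\delta_0+\delta_1))^{\otimes\mathbb{Z}}$ and $S$ the left shift, let $\xi$ be the coordinate process, and let $\tau$ be the cellular automaton $\tau((a_n)_n)=(\tau_0(a_n,a_{n+1}))_n$ with $\tau_0(1,1)=1$ and $\tau_0=0$ otherwise. For every $n\ge0$, $h_\nu(\tau^n\xi,S)\le3\log(2)\,2^{-n/2}$.
   Context: The coordinate process is $\xi_i(a)=a_i$; $\tau^n\xi$ is the process $((\tau^na)_i)_{i\in\mathbb{Z}}$. For a finite-valued process $\eta$, $h_\nu(\eta,S)=\lim_m\frac1mH_\nu(\eta_{[0,m]})$ with $H_\nu$ Shannon entropy. *)

theory Defs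
  imports "HOL-Probability.Probability"
begin

text \<open>Bernoulli(1/2) product measure on {0,1}^Z; the bit 1 is encoded as True.\<close>
definition nu :: "(int \<Rightarrow> bool) measure" where
  "nu = PiM UNIV (\<lambda>_. measure_pmf (bernoulli_pmf (1/2)))"

text \<open>Left shift S (not needed in the entropy formula, recorded for completeness).\<close>
definition shiftS :: "(int \<Rightarrow> bool) \<Rightarrow> (int \<Rightarrow> bool)" where
  "shiftS a = (\<lambda>i. a (i + 1))"

definition tau0 :: "bool \<Rightarrow> bool \<Rightarrow> bool" where
  "tau0 x y = (x \<and> y)"

definition tau :: "(int \<Rightarrow> bool) \<Rightarrow> (int \<Rightarrow> bool)" where
  "tau a = (\<lambda>n. tau0 (a n) (a (n + 1)))"

definition shannon_H :: "'a measure \<Rightarrow> ('a \<Rightarrow> 'b) \<Rightarrow> real" where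
  "shannon_H M X = - (\<Sum>y \<in> X ` space M.
      measure M (X -` {y} \<inter> space M) * ln (measure M (X -` {y} \<inter> space M)))"

definition block :: "nat \<Rightarrow> nat \<Rightarrow> (int \<Rightarrow> bool) \<Rightarrow> bool list" where
  "block n m a = map (\<lambda>i. (tau ^^ n) a (int i)) [0..<m+1]"

end

theory Submission
  imports Defs
begin

(* Write H_m for the entropy of the block (\<tau>^n \<xi>)_[0,m]. Since \<nu> is shift invariant and entropy
   is subadditive on joint variables, k \<mapsto> H_(k-1) is a subadditive sequence, so by Fekete's lemma
   H_m / m converges to inf_k H_(k-1) / k \<le> H_0. The single symbol (\<tau>^n \<xi>)_0 is the indicator of
   n + 1 consecutive ones, of probability q = 2^-(n+1), and its binary entropy
   -q ln q - (1-q) ln(1-q) \<le> q (1 + (n+1) ln 2) is at most 3 ln 2 2^(-n/2). *)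

lemma shannon_H_eq_sum_superset:
  assumes "finite A" "X ` space M \<subseteq> A"
  shows "shannon_H M X =
    - (\<Sum>y\<in>A. measure M (X -` {y} \<inter> space M) * ln (measure M (X -` {y} \<inter> space M)))"
  unfolding shannon_H_def
proof (intro arg_cong[where f=uminus] sum.mono_neutral_left assms ballI)
  fix y assume "y \<in> A - X ` space M"
  then have "X -` {y} \<inter> space M = {}" by auto
  then show "measure M (X -` {y} \<inter> space M) * ln (measure M (X -` {y} \<inter> space M)) = 0" by simp
qed

lemma shannon_H_comp_inj:
  assumes "inj_on f (X ` space M)"
  shows "shannon_H M (\<lambda>w. f (X w)) = shannon_H M X"
proof -
  have "(\<lambda>w. f (X w)) -` {f y} \<inter> space M = X -` {y} \<inter> space M" if "y \<in> X ` space M" for y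
    using assms that by (auto simp: inj_on_def)
  then show ?thesis
    unfolding shannon_H_def image_image[of f X, symmetric] by (simp add: sum.reindex[OF assms])
qed

lemma shannon_H_comp_measure_preserving:
  assumes T: "T \<in> measurable M M" "distr M M T = M" and X: "simple_function M X"
  shows "shannon_H M (\<lambda>w. X (T w)) = shannon_H M X"
proof -
  have eq: "measure M ((\<lambda>w. X (T w)) -` {y} \<inter> space M) = measure M (X -` {y} \<inter> space M)" for y
  proof -
    have "(\<lambda>w. X (T w)) -` {y} \<inter> space M = T -` (X -` {y} \<inter> space M) \<inter> space M"
      using measurable_space[OF T(1)] by auto
    then show ?thesis
      using measure_distr[OF T(1) simple_functionD(2)[OF X]] T(2) by metis
  qed
  have "(\<lambda>w. X (T w)) ` space M \<subseteq> X ` space M"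
    using measurable_space[OF T(1)] by auto
  then show ?thesis
    using simple_functionD(1)[OF X]
    by (simp only: shannon_H_eq_sum_superset[of "X ` space M"] eq order_refl)
qed

context prob_space
begin

lemma shannon_H_nonneg: "0 \<le> shannon_H M X"
proof -
  have "measure M A * ln (measure M A) \<le> 0" for A
    by (cases "measure M A = 0") (auto intro!: mult_nonneg_nonpos simp: less_le)
  then show ?thesis
    unfolding shannon_H_def by (simp add: sum_nonpos)
qed

lemma shannon_H_eq_entropy:
  assumes X: "simple_function M X"
  shows "shannon_H M X = entropy (exp 1) (count_space (X ` space M)) X"
proof -
  interpret information_space M "exp 1"
    by unfold_locales simp
  show ?thesis
    unfolding entropy_simple_distributed[OF simple_distributedI[OF X measure_nonneg refl]]
    by (simp add: shannon_H_def log_ln[symmetric])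
qed

lemma shannon_H_pair_le:
  assumes X: "simple_function M X" and Y: "simple_function M Y"
  shows "shannon_H M (\<lambda>w. (X w, Y w)) \<le> shannon_H M X + shannon_H M Y"
proof -
  interpret information_space M "exp 1"
    by unfold_locales simp
  show ?thesis
    using entropy_chain_rule[OF X Y] conditional_entropy_less_eq_entropy[OF Y X]
    by (simp add: shannon_H_eq_entropy X Y)
qed

end

lemma subadditive_mult_add_le:
  fixes u :: "nat \<Rightarrow> real"
  assumes sub: "\<And>a b. u (a + b) \<le> u a + u b"
  shows "u (q * p + r) \<le> q * u p + u r"
proof (induction q)
  case (Suc q)
  have "u (Suc q * p + r) \<le> u p + u (q * p + r)"
    using sub[of p "q * p + r"] by (simp add: add.assoc)
  then show ?case
    using Suc by (simp add: algebra_simps)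
qed simp

lemma fekete_subadditive:
  fixes u :: "nat \<Rightarrow> real"
  assumes sub: "\<And>a b. u (a + b) \<le> u a + u b" and nonneg: "\<And>k. 0 \<le> u k"
  shows "(\<lambda>k. u k / k) \<longlonglongrightarrow> (INF k\<in>{1..}. u k / k)"
proof (rule LIMSEQ_I)
  define L where "L = (INF k\<in>{1..}. u k / k)"
  have bdd: "bdd_below ((\<lambda>k. u k / k) ` {1..})"
    by (rule bdd_belowI[of _ 0]) (auto simp: nonneg)
  fix e :: real assume e: "0 < e"
  obtain p where p: "p \<ge> 1" "u p / p < L + e / 2"
    using cInf_less_iff[OF _ bdd, of "L + e / 2"] e unfolding L_def by auto
  define C where "C = (\<Sum>r<p. u r)"
  have bound: "u k \<le> k * (u p / p) + C" for k
  proof -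
    have "u k \<le> (k div p) * u p + u (k mod p)"
      using subadditive_mult_add_le[OF sub, of "k div p" p "k mod p"] by simp
    also have "u (k mod p) \<le> C"
      unfolding C_def using p(1) by (intro member_le_sum nonneg) auto
    also have "real (k div p) * u p \<le> k * (u p / p)"
    proof -
      have "real (k div p) * p \<le> k"
        by (metis div_times_less_eq_dividend of_nat_le_iff of_nat_mult)
      then have "real (k div p) * p * u p \<le> k * u p"
        using nonneg[of p] by (rule mult_right_mono)
      then show ?thesis
        using p(1) by (simp add: field_simps)
    qed
    finally show ?thesis by simp
  qed
  obtain N :: nat where N: "2 * C / e < N"
    using reals_Archimedean2 by blast
  have "\<bar>u k / k - L\<bar> < e" if k: "k \<ge> N + 1" for k
  proof -
    have kpos: "0 < real k" using k by simp
    have "2 * C / e < k"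
      using N k by linarith
    then have "C / k < e / 2"
      using e kpos by (simp add: field_simps)
    moreover have "u k / k \<le> u p / p + C / k"
      using bound[of k] kpos by (simp add: field_simps)
    moreover have "L \<le> u k / k"
      unfolding L_def using bdd k by (intro cInf_lower) auto
    ultimately show ?thesis
      using p(2) by linarith
  qed
  then show "\<exists>N. \<forall>k\<ge>N. norm (u k / k - (INF k\<in>{1..}. u k / k)) < e"
    unfolding L_def by auto
qed

definition binary_entropy :: "real \<Rightarrow> real" where
  "binary_entropy q = - (q * ln q + (1 - q) * ln (1 - q))"

lemma binary_entropy_le:
  assumes "0 < q" "q < 1"
  shows "binary_entropy q \<le> q * (1 - ln q)"
proof -
  have "- ln (1 - q) \<le> q / (1 - q)"
    using ln_le_minus_one[of "1 / (1 - q)"] assms by (simp add: ln_div field_simps)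
  then have "- ((1 - q) * ln (1 - q)) \<le> q"
    using assms by (simp add: field_simps)
  then show ?thesis
    unfolding binary_entropy_def by (simp add: algebra_simps)
qed

lemma add_3_le_6_mult_powr_half: "real n + 3 \<le> 6 * 2 powr (real n / 2)"
proof -
  have "(real n + 3)\<^sup>2 \<le> 36 * 2 ^ n"
  proof (induction n)
    case (Suc n)
    have "(real (Suc n) + 3)\<^sup>2 \<le> 2 * (real n + 3)\<^sup>2"
      by (simp add: power2_eq_square algebra_simps)
    with Suc show ?case by simp
  qed simp
  also have "36 * 2 ^ n = (6 * 2 powr (real n / 2))\<^sup>2"
    by (simp add: power_mult_distrib powr_realpow[symmetric] powr_powr)
  finally show ?thesis
    by (rule power2_le_imp_le) simp
qed

lemma binary_entropy_half_pow_le: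
  "binary_entropy ((1/2) ^ (n + 1)) \<le> 3 * ln 2 * 2 powr (- real n / 2)"
proof -
  define q :: real where "q = (1/2) ^ (n + 1)"
  have q: "0 < q" "q < 1"
    unfolding q_def using power_Suc_less_one[of "1/2 :: real" n] by simp_all
  have "ln q = - ((real n + 1) * ln 2)"
    unfolding q_def by (simp add: ln_realpow ln_div algebra_simps)
  then have "binary_entropy q \<le> q * (1 + (real n + 1) * ln 2)"
    using binary_entropy_le[OF q] by simp
  also have "\<dots> \<le> q * ((real n + 3) * ln 2)"
    using q ln2_ge_two_thirds by (intro mult_left_mono) (auto simp: algebra_simps)
  also have "\<dots> \<le> q * (6 * 2 powr (real n / 2) * ln 2)"
    using q add_3_le_6_mult_powr_half[of n] by (intro mult_left_mono mult_right_mono) auto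
  also have "\<dots> = 3 * ln 2 * (2 * q * 2 powr (real n / 2))"
    by simp
  also have "2 * q * 2 powr (real n / 2) = 2 powr (- real n / 2)"
    unfolding q_def
    by (simp add: powr_realpow[symmetric] power_divide powr_diff[symmetric] powr_minus_divide)
  finally show ?thesis
    unfolding q_def .
qed

lemma prob_space_nu: "prob_space nu"
  unfolding nu_def by (intro prob_space_PiM prob_space_measure_pmf)

lemma space_nu [simp]: "space nu = UNIV"
  unfolding nu_def by (simp add: space_PiM)

lemma simple_function_coordinate: "simple_function nu (\<lambda>a. a i)"
  unfolding simple_function_eq_measurable nu_def by (simp add: measurable_component_singleton)

definition shift_by :: "int \<Rightarrow> (int \<Rightarrow> 'a) \<Rightarrow> (int \<Rightarrow> 'a)" where
  "shift_by k a = (\<lambda>i. a (i + k))"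

lemma shift_by_restrict: "shift_by k = (\<lambda>a. \<lambda>i\<in>UNIV. a (i + k))"
  by (simp add: shift_by_def fun_eq_iff)

lemma measurable_shift_by: "shift_by k \<in> measurable nu nu"
  unfolding shift_by_restrict nu_def
  by (intro measurable_restrict measurable_component_singleton) auto

lemma distr_shift_by_nu: "distr nu nu (shift_by k) = nu"
  unfolding shift_by_restrict nu_def
  using distr_PiM_reindex[of UNIV "\<lambda>_. measure_pmf (bernoulli_pmf (1/2))" "\<lambda>i. i + k" UNIV]
  by (simp add: prob_space_measure_pmf inj_on_def)

lemma measure_nu_cylinder_True:
  assumes "finite J"
  shows "measure nu {a. \<forall>j\<in>J. a j} = (1/2) ^ card J"
proof -
  have cyl: "{a. \<forall>j\<in>J. a j} = prod_emb UNIV (\<lambda>_. measure_pmf (bernoulli_pmf (1/2))) J (Pi\<^sub>E J (\<lambda>_. {True}))"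
    by (auto simp: prod_emb_def space_PiM restrict_def fun_eq_iff)
  have "emeasure nu {a. \<forall>j\<in>J. a j} = (\<Prod>j\<in>J. emeasure (measure_pmf (bernoulli_pmf (1/2))) {True})"
    unfolding cyl nu_def using assms
    by (subst emeasure_PiM_emb) (auto simp: prob_space_measure_pmf)
  also have "\<dots> = (\<Prod>j\<in>J. ennreal (1/2))"
    by (simp add: emeasure_pmf_single)
  also have "\<dots> = ennreal ((1/2) ^ card J)"
    unfolding prod_constant by (rule ennreal_power) simp
  finally show ?thesis
    by (simp add: measure_def)
qed

lemma funpow_tau: "(tau ^^ n) a i \<longleftrightarrow> (\<forall>j\<le>n. a (i + int j))"
proof (induction n arbitrary: a)
  case (Suc n)
  have "(tau ^^ Suc n) a i \<longleftrightarrow> (\<forall>j\<le>n. a (i + int j) \<and> a (i + int (Suc j)))"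
    by (simp add: funpow_Suc_right Suc tau_def tau0_def algebra_simps del: funpow.simps)
  also have "\<dots> \<longleftrightarrow> (\<forall>j\<le>Suc n. a (i + int j))"
    using le_Suc_eq by blast
  finally show ?case .
qed simp

lemma simple_function_funpow_tau: "simple_function nu (\<lambda>a. (tau ^^ n) a i)"
proof (induction n arbitrary: i)
  case (Suc n)
  have "(\<lambda>a. (tau ^^ Suc n) a i) = (\<lambda>a. (tau ^^ n) a i \<and> (tau ^^ n) a (i + 1))"
    by (simp add: tau_def tau0_def)
  then show ?case
    using simple_function_compose2[where h="(\<and>)", OF Suc Suc] by simp
qed (simp add: simple_function_coordinate)

lemma simple_function_map:
  assumes "\<And>i. simple_function M (f i)"
  shows "simple_function M (\<lambda>x. map (\<lambda>i. f i x) xs)"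
proof (induction xs)
  case (Cons i xs)
  then show ?case
    using simple_function_compose2[where h="(#)", OF assms] by simp
qed simp

lemma simple_function_block: "simple_function nu (block n m)"
  unfolding block_def by (rule simple_function_map) (rule simple_function_funpow_tau)

lemma block_append:
  "block n (p + q + 1) a = block n p a @ block n q (shift_by (int (p + 1)) a)"
proof -
  have "[0..<p + q + 1 + 1] = [0..<p + 1] @ [p + 1..<p + 1 + (q + 1)]"
    by (metis add.assoc add.commute upt_add_eq_append zero_le)
  also have "[p + 1..<p + 1 + (q + 1)] = map (\<lambda>i. i + (p + 1)) [0..<q + 1]"
    by (metis add.commute map_add_upt)
  finally have "[0..<p + q + 1 + 1] = [0..<p + 1] @ map (\<lambda>i. i + (p + 1)) [0..<q + 1]" .
  then show ?thesis
    unfolding block_def by (simp add: funpow_tau shift_by_def algebra_simps del: upt_Suc)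
qed

lemma shannon_H_block_subadditive:
  "shannon_H nu (block n (p + q + 1)) \<le> shannon_H nu (block n p) + shannon_H nu (block n q)"
proof -
  interpret prob_space nu by (rule prob_space_nu)
  define T :: "(int \<Rightarrow> bool) \<Rightarrow> _" where "T = shift_by (int (p + 1))"
  have "inj_on (\<lambda>(u, v). u @ v) ((\<lambda>a. (block n p a, block n q (T a))) ` space nu)"
    by (auto simp: inj_on_def block_def)
  moreover have "block n (p + q + 1) = (\<lambda>a. block n p a @ block n q (T a))"
    by (rule ext) (simp only: block_append T_def)
  ultimately have "shannon_H nu (block n (p + q + 1)) = shannon_H nu (\<lambda>a. (block n p a, block n q (T a)))"
    using shannon_H_comp_inj by fastforce
  also have "\<dots> \<le> shannon_H nu (block n p) + shannon_H nu (\<lambda>a. block n q (T a))"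
    unfolding T_def
    by (intro shannon_H_pair_le simple_function_block simple_function_comp[OF measurable_shift_by])
  also have "shannon_H nu (\<lambda>a. block n q (T a)) = shannon_H nu (block n q)"
    unfolding T_def
    by (rule shannon_H_comp_measure_preserving[OF measurable_shift_by distr_shift_by_nu simple_function_block])
  finally show ?thesis by simp
qed

lemma shannon_H_block_0: "shannon_H nu (block n 0) = binary_entropy ((1/2) ^ (n + 1))"
proof -
  interpret prob_space nu by (rule prob_space_nu)
  define X where "X a = (tau ^^ n) a 0" for a
  define C where "C = {a. \<forall>j\<le>n. a (int j)}"
  have C: "X -` {True} = C" "X -` {False} = UNIV - C"
    by (simp_all add: X_def C_def funpow_tau set_eq_iff)
  have "simple_function nu X"
    unfolding X_def[abs_def] by (rule simple_function_funpow_tau)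
  then have "C \<in> sets nu"
    using simple_functionD(2)[of nu X "{True}"] by (simp add: C)
  moreover have "measure nu C = (1/2) ^ (n + 1)"
  proof -
    have "C = {a. \<forall>j\<in>int ` {..n}. a j}"
      by (auto simp: C_def)
    then show ?thesis
      using measure_nu_cylinder_True[of "int ` {..n}"] by (simp add: card_image)
  qed
  ultimately have "measure nu (UNIV - C) = 1 - (1/2) ^ (n + 1)"
    using prob_compl by simp
  have "block n 0 = (\<lambda>a. [X a])"
    by (simp add: block_def X_def fun_eq_iff)
  then have "shannon_H nu (block n 0) = shannon_H nu X"
    using shannon_H_comp_inj[of "\<lambda>b. [b]" X nu] by (simp add: inj_on_def)
  also have "\<dots> = - (\<Sum>y\<in>UNIV. measure nu (X -` {y} \<inter> space nu) * ln (measure nu (X -` {y} \<inter> space nu)))"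
    by (rule shannon_H_eq_sum_superset) auto
  also have "\<dots> = binary_entropy ((1/2) ^ (n + 1))"
    by (simp add: UNIV_bool C binary_entropy_def \<open>measure nu C = _\<close> \<open>measure nu (UNIV - C) = _\<close>)
  finally show ?thesis .
qed

lemma LIMSEQ_shannon_H_block:
  "(\<lambda>m. shannon_H nu (block n m) / m) \<longlonglongrightarrow> (INF k\<in>{1..}. shannon_H nu (block n (k - 1)) / k)"
proof -
  interpret prob_space nu by (rule prob_space_nu)
  \<comment> \<open>\<open>block n m\<close> has \<open>m + 1\<close> symbols, so \<open>u k\<close> is the entropy of a block of length \<open>k\<close>.\<close>
  define u where "u k = shannon_H nu (block n (k - 1))" for k
  have nonneg: "0 \<le> u k" for k
    unfolding u_def by (rule shannon_H_nonneg)
  have sub: "u (a + b) \<le> u a + u b" for a b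
  proof (cases "a = 0 \<or> b = 0")
    case False
    then obtain p q where "a = Suc p" "b = Suc q"
      by (meson not0_implies_Suc)
    then show ?thesis
      unfolding u_def using shannon_H_block_subadditive[of n p q] by simp
  qed (use nonneg in auto)
  have "(\<lambda>k. u k / k) \<longlonglongrightarrow> (INF k\<in>{1..}. u k / k)"
    by (rule fekete_subadditive[OF sub nonneg])
  then have "(\<lambda>m. u (Suc m) / Suc m * (Suc m / m)) \<longlonglongrightarrow> (INF k\<in>{1..}. u k / k) * 1"
    by (intro tendsto_mult LIMSEQ_Suc LIMSEQ_Suc_n_over_n)
  moreover have "(\<lambda>m. u (Suc m) / Suc m * (Suc m / m)) = (\<lambda>m. shannon_H nu (block n m) / m)"
  proof
    fix m show "u (Suc m) / Suc m * (Suc m / m) = shannon_H nu (block n m) / m"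
      \<comment> \<open>for \<open>m = 0\<close> both sides are \<open>0\<close>, as \<open>x / 0 = 0\<close>\<close>
      by (cases "m = 0") (simp_all add: u_def del: of_nat_Suc)
  qed
  ultimately show ?thesis
    by (simp only: mult_1_right u_def)
qed

theorem proposition4p3:
  fixes n :: nat
  shows "\<exists>L. (\<lambda>m. shannon_H nu (block n m) / real m) \<longlonglongrightarrow> L
              \<and> L \<le> 3 * ln 2 * 2 powr (- real n / 2)"
proof -
  interpret prob_space nu by (rule prob_space_nu)
  have "(INF k\<in>{1..}. shannon_H nu (block n (k - 1)) / k) \<le> shannon_H nu (block n (1 - 1)) / real 1"
    by (rule cINF_lower) (auto intro!: bdd_belowI[of _ 0] simp: shannon_H_nonneg)
  also have "\<dots> = binary_entropy ((1/2) ^ (n + 1))"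
    by (simp add: shannon_H_block_0)
  also have "\<dots> \<le> 3 * ln 2 * 2 powr (- real n / 2)"
    by (rule binary_entropy_half_pow_le)
  finally show ?thesis
    using LIMSEQ_shannon_H_block by blast
qed

end
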